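(* Suppose that $U=L(0)\otimes A\oplus L(2)\otimes B$. The algebra $\mathrm{Com}^{\mathrm{TKK}}(U)$ is the quotient of $S(U)$ by the relations given by the $\mathfrak{sl}_2$-submodule in $S^2(U)$ generated by $S^2(e\otimes B)$, where $e$ is the highest weight vector of $L(2)$. In particular, we have an isomorphism of commutative associative algebras \[ \mathrm{Com}^{\mathrm{TKK}}(U)\cong S(A)\otimes\mathrm{Com}^{\mathrm{TKK}}(L(2)\otimes B). \]
   Context: We work over a field $k$ of characteristic zero. For $n\ge 0$, $L(n)$ denotes the irreducible $\mathfrak{sl}_2$-module of highest weight $n$; $L(0)$ is the trivial module and $L(2)$ is the adjoint module $\mathfrak{sl}_2$ with basis $e,f,h$. The Tits--Kantor--Koecher category $\mathrm{TKK}$ has as objects the completely reducible $\mathfrak{sl}_2$-modules that are direct sums of copies of $L(0)$ and $L(2)$, i.e. modules $L(0)\otimes A\oplus L(2)\otimes B$ for multiplicity vector spaces $A,B$, and as morphisms the $\mathfrak{sl}_2$-module maps. For an operad $\mathcal{P}$, a $\mathcal{P}$-algebra in $\mathrm{TKK}$ is an object of $\mathrm{TKK}$ with a $\mathcal{P}$-algebra structure whose structure map is $\mathfrak{sl}_2$-equivariant; the free $\mathcal{P}$-algebra $\mathcal{P}^{\mathrm{TKK}}(U)$ in $\mathrm{TKK}$ generated by $U$ is the left adjoint of the forgetful functor, and it is the quotient of the free $\mathcal{P}$-algebra $\mathcal{P}(U)$ by the ideal generated by all isotypic components of the form $L(m)$, $m\ne 0,2$. Here $\mathrm{Com}(V)$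 denotes the free unital commutative associative algebra, i.e. the symmetric algebra $S(V)$, and $\mathrm{Com}^{\mathrm{TKK}}(U)$ is the free unital commutative associative algebra in $\mathrm{TKK}$ generated by $U$. *)

theory Defs
  imports Main "HOL-Library.Poly_Mapping"
begin

text \<open>Polynomial (= symmetric) algebra over the field 'k in variables of type 'v:
  finitely supported functions from monomials (exponent vectors) to coefficients.\<close>
type_synonym ('v, 'k) mpoly = "('v \<Rightarrow>\<^sub>0 nat) \<Rightarrow>\<^sub>0 'k"

definition Var :: "'v \<Rightarrow> ('v, 'k::comm_ring_1) mpoly" where
  "Var v = Poly_Mapping.single (Poly_Mapping.single v 1) 1"

definition Const :: "'k::comm_ring_1 \<Rightarrow> ('v, 'k) mpoly" where
  "Const c = Poly_Mapping.single 0 c"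

definition vars :: "('v, 'k::comm_ring_1) mpoly \<Rightarrow> 'v set" where
  "vars p = (\<Union>\<alpha>\<in>Poly_Mapping.keys p. Poly_Mapping.keys \<alpha>)"

text \<open>Polynomials whose variables lie in V: the symmetric algebra on the span of V.\<close>
definition polys :: "'v set \<Rightarrow> ('v, 'k::comm_ring_1) mpoly set" where
  "polys V = {p. vars p \<subseteq> V}"

definition pd :: "'v \<Rightarrow> ('v, 'k::comm_ring_1) mpoly \<Rightarrow> ('v, 'k) mpoly" where
  "pd x p = Abs_poly_mapping
     (\<lambda>\<alpha>::'v \<Rightarrow>\<^sub>0 nat. of_nat (Poly_Mapping.lookup \<alpha> x + 1) * Poly_Mapping.lookup p (\<alpha> + Poly_Mapping.single x 1))"

text \<open>The basis e, h, f of sl2 and its adjoint action: ad g s = (c, t) means [g,s] = c t.\<close>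
datatype sl2b = E | H | F

fun ad :: "sl2b \<Rightarrow> sl2b \<Rightarrow> int \<times> sl2b" where
  "ad E E = (0, E)" | "ad E H = (-2, E)" | "ad E F = (1, H)"
| "ad H E = (2, E)" | "ad H H = (0, H)" | "ad H F = (-2, F)"
| "ad F E = (-1, H)" | "ad F H = (2, F)" | "ad F F = (0, F)"

text \<open>Extension of the action on generators (linear forms) to the whole symmetric
  algebra as derivations.\<close>
definition act :: "(sl2b \<Rightarrow> 'v \<Rightarrow> ('v, 'k::comm_ring_1) mpoly)
                   \<Rightarrow> sl2b \<Rightarrow> ('v, 'k) mpoly \<Rightarrow> ('v, 'k) mpoly" where
  "act gen g p = (\<Sum>x\<in>vars p. pd x p * gen g x)"

text \<open>U = L(0) \<otimes> A \<oplus> L(2) \<otimes> B with basis Inl a (a \<in> IA, basis of A) and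
  Inr (b, s) = s \<otimes> b (b \<in> IB, basis of B, s \<in> {e,h,f}).\<close>
definition gen_U :: "sl2b \<Rightarrow> 'a + 'b \<times> sl2b \<Rightarrow> ('a + 'b \<times> sl2b, 'k::comm_ring_1) mpoly" where
  "gen_U g x = (case x of Inl a \<Rightarrow> 0
      | Inr (b, s) \<Rightarrow> (case ad g s of (c, t) \<Rightarrow> Const (of_int c) * Var (Inr (b, t))))"

definition vars_U :: "'a set \<Rightarrow> 'b set \<Rightarrow> ('a + 'b \<times> sl2b) set" where
  "vars_U IA IB = Inl ` IA \<union> Inr ` (IB \<times> UNIV)"

definition gen_B :: "sl2b \<Rightarrow> 'b \<times> sl2b \<Rightarrow> ('b \<times> sl2b, 'k::comm_ring_1) mpoly" where
  "gen_B g x = (case x of (b, s) \<Rightarrow>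
      (case ad g s of (c, t) \<Rightarrow> Const (of_int c) * Var (b, t)))"

definition ideal_gen :: "'v set \<Rightarrow> ('v, 'k::comm_ring_1) mpoly set \<Rightarrow> ('v, 'k) mpoly set" where
  "ideal_gen V S = {(\<Sum>i<n. r i * s i) | (n::nat) r s. \<forall>i<n. r i \<in> polys V \<and> s i \<in> S}"

text \<open>w 0, ..., w m is a basis of a submodule isomorphic to L(m), in the standard
  form h w_i = (m-2i) w_i, f w_i = w_(i+1), e w_i = i(m-i+1) w_(i-1).\<close>
definition is_Lcopy :: "'v set \<Rightarrow> (sl2b \<Rightarrow> ('v, 'k::field_char_0) mpoly \<Rightarrow> ('v, 'k) mpoly)
                        \<Rightarrow> nat \<Rightarrow> (nat \<Rightarrow> ('v, 'k) mpoly) \<Rightarrow> bool" where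
  "is_Lcopy V A m w \<longleftrightarrow>
     (\<forall>i\<le>m. w i \<in> polys V) \<and>
     (\<forall>c. (\<Sum>i\<le>m. Const (c i) * w i) = 0 \<longrightarrow> (\<forall>i\<le>m. c i = 0)) \<and>
     (\<forall>i\<le>m. A H (w i) = Const (of_int (int m - 2 * int i)) * w i) \<and>
     (\<forall>i\<le>m. A F (w i) = (if i = m then 0 else w (Suc i))) \<and>
     (\<forall>i\<le>m. A E (w i) = (if i = 0 then 0 else Const (of_nat (i * (m - i + 1))) * w (i - 1)))"

definition span_of :: "nat \<Rightarrow> (nat \<Rightarrow> ('v, 'k::comm_ring_1) mpoly) \<Rightarrow> ('v, 'k) mpoly set" where
  "span_of m w = {(\<Sum>i\<le>m. Const (c i) * w i) | c. True}"

definition isotypic :: "'v set \<Rightarrow> (sl2b \<Rightarrow> ('v, 'k::field_char_0) mpoly \<Rightarrow> ('v, 'k) mpoly)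
                        \<Rightarrow> nat \<Rightarrow> ('v, 'k) mpoly set" where
  "isotypic V A m = {(\<Sum>j<n. u j) | (n::nat) u.
      \<forall>j<n. \<exists>w. is_Lcopy V A m w \<and> u j \<in> span_of m w}"

text \<open>The ideal whose quotient is Com^TKK: generated by all isotypic components L(m), m \<noteq> 0,2.\<close>
definition tkk_ideal :: "'v set \<Rightarrow> (sl2b \<Rightarrow> ('v, 'k::field_char_0) mpoly \<Rightarrow> ('v, 'k) mpoly)
                         \<Rightarrow> ('v, 'k) mpoly set" where
  "tkk_ideal V A = ideal_gen V (\<Union>m\<in>{m. m \<noteq> 0 \<and> m \<noteq> 2}. isotypic V A m)"

inductive_set submod_gen :: "(sl2b \<Rightarrow> ('v, 'k::comm_ring_1) mpoly \<Rightarrow> ('v, 'k) mpoly)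
                              \<Rightarrow> ('v, 'k) mpoly set \<Rightarrow> ('v, 'k) mpoly set"
  for A S where
  base: "s \<in> S \<Longrightarrow> s \<in> submod_gen A S"
| zero: "0 \<in> submod_gen A S"
| add: "p \<in> submod_gen A S \<Longrightarrow> q \<in> submod_gen A S \<Longrightarrow> p + q \<in> submod_gen A S"
| smult: "p \<in> submod_gen A S \<Longrightarrow> Const c * p \<in> submod_gen A S"
| action: "p \<in> submod_gen A S \<Longrightarrow> A g p \<in> submod_gen A S"

text \<open>The algebra embedding S(L(2) \<otimes> B) \<rightarrow> S(U) induced by the inclusion of variables.\<close>
definition embed :: "('b \<times> sl2b, 'k::comm_ring_1) mpoly \<Rightarrow> ('a + 'b \<times> sl2b, 'k) mpoly" where
  "embed q = (\<Sum>\<alpha>\<in>Poly_Mapping.keys q. Poly_Mapping.single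
       (\<Sum>x\<in>Poly_Mapping.keys \<alpha>. Poly_Mapping.single (Inr x) (Poly_Mapping.lookup \<alpha> x)) (Poly_Mapping.lookup q \<alpha>))"

end

theory Submission
  imports Defs
begin

text \<open>Write \<open>G\<close> for the products \<open>(e \<otimes> b) (e \<otimes> b')\<close>. Since \<open>h\<close> acts on a monomial by twice its
  number of \<open>e\<close>-factors minus its number of \<open>f\<close>-factors, a highest weight vector of weight
  \<open>m \<notin> {0, 2}\<close> is a combination of monomials with two \<open>e\<close>-factors, i.e. lies in the ideal
  generated by \<open>G\<close>. The ideal generated by an \<open>sl\<^sub>2\<close>-submodule is \<open>sl\<^sub>2\<close>-stable, and a copy of
  \<open>L(m)\<close> is spanned by the \<open>f\<close>-images of its highest weight vector, so every isotypic component
  \<open>L(m)\<close>, \<open>m \<noteq> 0, 2\<close>, lies in the ideal generated by the submodule generated by \<open>G\<close>.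
  Conversely, \<open>(e \<otimes> b) (e \<otimes> b')\<close> is the highest weight vector of an explicit copy of \<open>L(4)\<close>
  already inside \<open>S(L(2) \<otimes> B)\<close>, and the inclusion \<open>S(L(2) \<otimes> B) \<rightarrow> S(U)\<close> is an
  \<open>sl\<^sub>2\<close>-equivariant algebra map, hence carries copies of \<open>L(m)\<close> to copies of \<open>L(m)\<close>. This
  gives the chain \<open>tkk(U) \<subseteq> (sl\<^sub>2 \<cdot> G) \<subseteq> (tkk(L(2) \<otimes> B)) \<subseteq> tkk(U)\<close> of ideals of \<open>S(U)\<close>.\<close>

lemma single_add_induct [case_names zero add]:
  assumes "P 0" and "\<And>a b f. P f \<Longrightarrow> P (Poly_Mapping.single a b + f)"
  shows "P (f :: 'a \<Rightarrow>\<^sub>0 'b::monoid_add)"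
proof (induct f rule: update_induct)
  case const then show ?case using assms(1) .
next
  case (update f a b)
  have "Poly_Mapping.update a b f = Poly_Mapping.single a b + f"
    using update(1) by (intro poly_mapping_eqI) (auto simp: lookup_update lookup_add lookup_single in_keys_iff)
  then show ?case using assms(2) update(3) by simp
qed

lemma mpoly_induct [case_names Const Var add mult]:
  assumes "\<And>c. P (Const c)" and "\<And>x. P (Var x)"
    and "\<And>p q. P p \<Longrightarrow> P q \<Longrightarrow> P (p + q)" and "\<And>p q. P p \<Longrightarrow> P q \<Longrightarrow> P (p * q)"
  shows "P (p :: ('v, 'k::comm_ring_1) mpoly)"
proof -
  have Var_power: "P (Poly_Mapping.single (Poly_Mapping.single x n) (1::'k))" for x n
  proof (induct n)
    case 0 then show ?case using assms(1)[of 1] by (simp add: Const_def)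
  next
    case (Suc n)
    have "Poly_Mapping.single (Poly_Mapping.single x (Suc n)) (1::'k) =
        Var x * Poly_Mapping.single (Poly_Mapping.single x n) 1"
      by (simp add: Var_def mult_single single_add[symmetric])
    then show ?case using assms(4)[OF assms(2) Suc] by simp
  qed
  have monomial: "P (Poly_Mapping.single a (1::'k))" for a :: "'v \<Rightarrow>\<^sub>0 nat"
  proof (induct a rule: single_add_induct)
    case zero then show ?case using assms(1)[of 1] by (simp add: Const_def)
  next
    case (add x n a)
    have "Poly_Mapping.single (Poly_Mapping.single x n + a) (1::'k) =
        Poly_Mapping.single (Poly_Mapping.single x n) 1 * Poly_Mapping.single a 1"
      by (simp add: mult_single)
    then show ?case using assms(4)[OF Var_power add] by simp
  qed
  show ?thesis
  proof (induct p rule: single_add_induct)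
    case zero then show ?case using assms(1)[of 0] by (simp add: Const_def)
  next
    case (add a c p)
    have "Poly_Mapping.single a c = Const c * Poly_Mapping.single a 1"
      by (simp add: Const_def mult_single)
    then have "P (Poly_Mapping.single a c)" using assms(4)[OF assms(1) monomial] by simp
    then show ?case using assms(3) add by blast
  qed
qed

lemma single_sum: "Poly_Mapping.single k (sum f A) = (\<Sum>x\<in>A. Poly_Mapping.single k (f x))"
  by (induct A rule: infinite_finite_induct) (auto simp: single_add)

lemma sum_single_lookup: "(\<Sum>a\<in>Poly_Mapping.keys p. Poly_Mapping.single a (Poly_Mapping.lookup p a)) = p"
  by (rule poly_mapping_eqI) (simp add: lookup_sum lookup_single when_def in_keys_iff)

lemma keys_add_nat: "Poly_Mapping.keys ((a::'v \<Rightarrow>\<^sub>0 nat) + b) = Poly_Mapping.keys a \<union> Poly_Mapping.keys b"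
  by (auto simp: in_keys_iff lookup_add)

lemma minus_single_add_single:
  "Poly_Mapping.lookup a x \<noteq> 0 \<Longrightarrow> a - Poly_Mapping.single x 1 + Poly_Mapping.single x (1::nat) = a"
  by (rule poly_mapping_eqI) (auto simp: lookup_add lookup_minus lookup_single when_def)

lemma lookup_Const_mult: "Poly_Mapping.lookup (Const c * p) a = c * Poly_Mapping.lookup p a"
  unfolding Const_def mult_map_scale_conv_mult[symmetric] by transfer (auto simp: when_def)

lemma Const_of_int [simp]: "Const (of_int k) = of_int k"
  by (simp add: Const_def)

lemma Const_of_nat [simp]: "Const (of_nat k) = of_nat k"
  by (simp add: Const_def)

lemma Const_numeral [simp]: "Const (numeral n) = numeral n"
  by (simp add: Const_def)

lemma Const_0 [simp]: "Const 0 = 0"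
  by (simp add: Const_def)

lemma Const_neg_numeral [simp]: "Const (- numeral n) = - numeral n"
  by (simp add: Const_def single_uminus)

lemma Const_add: "Const (a + b) = Const a + Const b"
  by (simp add: Const_def single_add)

lemma Const_mult: "Const (a * b) = Const a * Const b"
  by (simp add: Const_def mult_single)

lemma Const_mult_eq_0_iff: "Const (c::'k::field) * p = 0 \<longleftrightarrow> c = 0 \<or> p = 0"
  by (metis Const_def lookup_Const_mult mult_eq_0_iff lookup_zero poly_mapping_eqI single_zero mult_zero_left)

lemma in_vars_iff: "x \<in> vars p \<longleftrightarrow> (\<exists>a\<in>Poly_Mapping.keys p. x \<in> Poly_Mapping.keys a)"
  by (auto simp: vars_def)

lemma finite_vars [simp]: "finite (vars p)"
  by (simp add: vars_def)

lemma vars_add: "vars (p + q) \<subseteq> vars p \<union> vars q"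
  using keys_add[of p q] by (auto simp: vars_def)

lemma vars_mult: "vars (p * q) \<subseteq> vars p \<union> vars q"
  using keys_mult[of p q] by (force simp: vars_def keys_add_nat)

lemma vars_single: "vars (Poly_Mapping.single a c) \<subseteq> Poly_Mapping.keys a"
  by (auto simp: vars_def split: if_splits)

lemma vars_Const [simp]: "vars (Const c) = {}"
  using vars_single[of 0 c] by (auto simp: Const_def)

lemma vars_Var: "vars (Var x) \<subseteq> {x}"
  using vars_single[of "Poly_Mapping.single x 1" 1] by (auto simp: Var_def split: if_splits)

lemma vars_sum: "vars (sum f A) \<subseteq> (\<Union>i\<in>A. vars (f i))"
  using keys_sum[of f A] by (force simp: vars_def)

lemma polys_add [intro]: "p \<in> polys V \<Longrightarrow> q \<in> polys V \<Longrightarrow> p + q \<in> polys V"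
  using vars_add by (fastforce simp: polys_def)

lemma polys_mult [intro]: "p \<in> polys V \<Longrightarrow> q \<in> polys V \<Longrightarrow> p * q \<in> polys V"
  using vars_mult by (fastforce simp: polys_def)

lemma polys_uminus [intro]: "p \<in> polys V \<Longrightarrow> - p \<in> polys V"
  by (simp add: polys_def vars_def)

lemma polys_diff [intro]: "p \<in> polys V \<Longrightarrow> q \<in> polys V \<Longrightarrow> p - q \<in> polys V"
  using polys_add[of p V "- q"] by auto

lemma polys_zero [simp]: "0 \<in> polys V"
  by (simp add: polys_def vars_def)

lemma polys_Const [simp]: "Const c \<in> polys V"
  by (simp add: polys_def)

lemma polys_numeral [simp]: "numeral n \<in> polys V"
  using polys_Const[of "numeral n" V] by simp

lemma polys_of_int [simp]: "of_int k \<in> polys V"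
  using polys_Const[of "of_int k" V] by simp

lemma polys_one [simp]: "1 \<in> polys V"
  using polys_Const[of 1 V] by (simp add: Const_def)

lemma polys_Var [intro]: "x \<in> V \<Longrightarrow> Var x \<in> polys V"
  using vars_Var by (fastforce simp: polys_def)

lemma polys_sum [intro]: "(\<And>i. i \<in> A \<Longrightarrow> f i \<in> polys V) \<Longrightarrow> sum f A \<in> polys V"
  using vars_sum[of f A] by (fastforce simp: polys_def)


section \<open>Partial derivatives and the induced action\<close>

lemma lookup_pd:
  fixes x :: 'v and p :: "('v, 'k::comm_ring_1) mpoly"
  shows "Poly_Mapping.lookup (pd x p) g =
     of_nat (Poly_Mapping.lookup g x + 1) * Poly_Mapping.lookup p (g + Poly_Mapping.single x 1)"
proof -
  have "inj (\<lambda>g::'v \<Rightarrow>\<^sub>0 nat. g + Poly_Mapping.single x 1)" by (auto intro: injI)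
  then have "finite ((\<lambda>g. g + Poly_Mapping.single x 1) -` Poly_Mapping.keys p)"
    by (intro finite_vimageI) auto
  moreover have "{g. of_nat (Poly_Mapping.lookup g x + 1) * Poly_Mapping.lookup p (g + Poly_Mapping.single x 1) \<noteq> (0::'k)}
      \<subseteq> (\<lambda>g. g + Poly_Mapping.single x 1) -` Poly_Mapping.keys p"
    by (auto simp: in_keys_iff)
  ultimately show ?thesis
    unfolding pd_def by (subst lookup_Abs_poly_mapping) (auto elim: rev_finite_subset)
qed

lemma pd_single:
  "pd x (Poly_Mapping.single a c) =
     Poly_Mapping.single (a - Poly_Mapping.single x 1) (of_nat (Poly_Mapping.lookup a x) * c)"
proof (rule poly_mapping_eqI)
  fix g
  have "g + Poly_Mapping.single x 1 = a \<longleftrightarrow> a - Poly_Mapping.single x 1 = g \<and> Poly_Mapping.lookup a x \<noteq> 0"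
    by (auto simp: poly_mapping_eq_iff fun_eq_iff lookup_add lookup_minus lookup_single when_def
        split: if_splits)
  then show "Poly_Mapping.lookup (pd x (Poly_Mapping.single a c)) g =
      Poly_Mapping.lookup (Poly_Mapping.single (a - Poly_Mapping.single x 1) (of_nat (Poly_Mapping.lookup a x) * c)) g"
    by (cases "g + Poly_Mapping.single x 1 = a") (auto simp: lookup_pd lookup_single when_def lookup_add)
qed

lemma pd_single_mult_single:
  fixes x :: 'v and c d :: "'k::comm_ring_1"
  shows "pd x (Poly_Mapping.single a c * Poly_Mapping.single b d) =
     pd x (Poly_Mapping.single a c) * Poly_Mapping.single b d + Poly_Mapping.single a c * pd x (Poly_Mapping.single b d)"
proof -
  have shift: "Poly_Mapping.lookup a x \<noteq> 0 \<Longrightarrow> a - Poly_Mapping.single x 1 + b = a + b - Poly_Mapping.single x 1"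
    for a b :: "'v \<Rightarrow>\<^sub>0 nat"
    by (rule poly_mapping_eqI) (auto simp: lookup_add lookup_minus lookup_single when_def)
  have l: "pd x (Poly_Mapping.single a c) * Poly_Mapping.single b d =
      Poly_Mapping.single (a + b - Poly_Mapping.single x 1) (of_nat (Poly_Mapping.lookup a x) * c * d)"
    using shift[of a b] by (cases "Poly_Mapping.lookup a x = 0") (simp_all add: pd_single mult_single)
  have r: "Poly_Mapping.single a c * pd x (Poly_Mapping.single b d) =
      Poly_Mapping.single (a + b - Poly_Mapping.single x 1) (of_nat (Poly_Mapping.lookup b x) * c * d)"
    using shift[of b a] by (cases "Poly_Mapping.lookup b x = 0") (simp_all add: pd_single mult_single ac_simps)
  show ?thesis
    unfolding l r by (simp add: mult_single pd_single lookup_add single_add[symmetric] algebra_simps)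
qed

lemma pd_single_mult_Var:
  assumes "x \<in> Poly_Mapping.keys a"
  shows "pd x (Poly_Mapping.single a c) * Var x =
           Poly_Mapping.single a (of_nat (Poly_Mapping.lookup a x) * (c::'k::comm_ring_1))"
  using assms minus_single_add_single[of a x] by (simp add: pd_single Var_def mult_single in_keys_iff)

lemma pd_zero [simp]: "pd x 0 = 0"
  by (rule poly_mapping_eqI) (simp add: lookup_pd)

lemma pd_add: "pd x (p + q) = pd x p + pd x q"
  by (rule poly_mapping_eqI) (simp add: lookup_pd lookup_add distrib_left)

lemma pd_mult: "pd x (p * q) = pd x p * q + p * pd x q"
proof (induct p rule: single_add_induct)
  case zero then show ?case by (simp add: pd_single)
next
  case (add a c p)
  have "pd x (Poly_Mapping.single a c * q) =
      pd x (Poly_Mapping.single a c) * q + Poly_Mapping.single a c * pd x q"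
  proof (induct q rule: single_add_induct)
    case zero then show ?case by (simp add: pd_single)
  next
    case (add b d q)
    then show ?case by (simp add: distrib_left distrib_right pd_add pd_single_mult_single)
  qed
  with add show ?case by (simp add: distrib_left distrib_right pd_add)
qed

lemma pd_Var: "pd x (Var y) = (if x = y then 1 else 0)"
  by (simp add: Var_def pd_single lookup_single)

lemma pd_eq_0_if_notin_vars:
  assumes "x \<notin> vars p"
  shows "pd x p = 0"
proof (rule poly_mapping_eqI)
  fix g :: "'a \<Rightarrow>\<^sub>0 nat"
  have "x \<in> Poly_Mapping.keys (g + Poly_Mapping.single x 1)"
    by (simp add: keys_add_nat)
  then have "g + Poly_Mapping.single x 1 \<notin> Poly_Mapping.keys p"
    using assms by (auto simp: in_vars_iff)
  then show "Poly_Mapping.lookup (pd x p) g = Poly_Mapping.lookup 0 g"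
    by (simp add: lookup_pd in_keys_iff)
qed

lemma vars_pd: "vars (pd x p) \<subseteq> vars p"
proof
  fix y assume "y \<in> vars (pd x p)"
  then obtain g where g: "g \<in> Poly_Mapping.keys (pd x p)" "y \<in> Poly_Mapping.keys g"
    by (auto simp: in_vars_iff)
  then have "g + Poly_Mapping.single x 1 \<in> Poly_Mapping.keys p"
    by (auto simp: in_keys_iff lookup_pd)
  moreover have "y \<in> Poly_Mapping.keys (g + Poly_Mapping.single x 1)"
    using g(2) by (simp add: keys_add_nat)
  ultimately show "y \<in> vars p" by (auto simp: in_vars_iff)
qed

lemma act_eq_sum_over:
  "finite S \<Longrightarrow> vars p \<subseteq> S \<Longrightarrow> act gen g p = (\<Sum>x\<in>S. pd x p * gen g x)"
  unfolding act_def by (rule sum.mono_neutral_left) (auto simp: pd_eq_0_if_notin_vars)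

lemma act_add: "act gen g (p + q) = act gen g p + act gen g q"
proof -
  let ?S = "vars p \<union> vars q"
  have "act gen g (p + q) = (\<Sum>x\<in>?S. pd x (p + q) * gen g x)"
    using vars_add[of p q] by (intro act_eq_sum_over) auto
  also have "\<dots> = (\<Sum>x\<in>?S. pd x p * gen g x) + (\<Sum>x\<in>?S. pd x q * gen g x)"
    by (simp add: pd_add distrib_right sum.distrib)
  also have "\<dots> = act gen g p + act gen g q"
    by (subst (1 2) act_eq_sum_over[of ?S]) auto
  finally show ?thesis .
qed

lemma act_mult: "act gen g (p * q) = act gen g p * q + p * act gen g q"
proof -
  let ?S = "vars p \<union> vars q"
  have "act gen g (p * q) = (\<Sum>x\<in>?S. pd x (p * q) * gen g x)"
    using vars_mult[of p q] by (intro act_eq_sum_over) auto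
  also have "\<dots> = (\<Sum>x\<in>?S. pd x p * gen g x) * q + p * (\<Sum>x\<in>?S. pd x q * gen g x)"
    by (simp add: pd_mult sum_distrib_left sum_distrib_right sum.distrib[symmetric] algebra_simps)
  also have "\<dots> = act gen g p * q + p * act gen g q"
    by (subst (1 2) act_eq_sum_over[of ?S]) auto
  finally show ?thesis .
qed

lemma act_Const [simp]: "act gen g (Const c) = 0"
  by (simp add: act_def)

lemma act_zero [simp]: "act gen g 0 = 0"
  by (simp add: act_def vars_def)

lemma act_numeral [simp]: "act gen g (numeral k) = 0"
  using act_Const[of gen g "numeral k"] by simp

lemma act_Const_mult: "act gen g (Const c * p) = Const c * act gen g p"
  by (simp add: act_mult)

lemma act_uminus: "act gen g (- p) = - act gen g p"
  using act_add[of gen g p "- p"] by (simp add: eq_neg_iff_add_eq_0 add.commute)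

lemma act_diff: "act gen g (p - q) = act gen g p - act gen g q"
  using act_add[of gen g p "- q"] by (simp add: act_uminus)

lemma act_sum: "act gen g (sum f A) = (\<Sum>i\<in>A. act gen g (f i))"
  by (induct A rule: infinite_finite_induct) (auto simp: act_add)

lemma act_Var: "act gen g (Var x) = gen g x"
  using act_eq_sum_over[of "{x}" "Var x" gen g] vars_Var[of x] by (simp add: pd_Var)

lemma act_in_polys:
  assumes "\<And>x. x \<in> V \<Longrightarrow> gen g x \<in> polys V" and "p \<in> polys V"
  shows "act gen g p \<in> polys V"
proof -
  have "pd x p * gen g x \<in> polys V" if "x \<in> vars p" for x
  proof
    show "pd x p \<in> polys V" using assms(2) vars_pd[of x p] by (auto simp: polys_def)
    show "gen g x \<in> polys V" using that assms by (auto simp: polys_def)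
  qed
  then show ?thesis unfolding act_def by blast
qed


section \<open>Generated ideals\<close>

lemma ideal_gen_induct [consumes 1, case_names zero step]:
  assumes "p \<in> ideal_gen V S" and "P 0"
    and "\<And>p r s. P p \<Longrightarrow> r \<in> polys V \<Longrightarrow> s \<in> S \<Longrightarrow> P (p + r * s)"
  shows "P p"
proof -
  obtain n :: nat and r s where p: "p = (\<Sum>i<n. r i * s i)" and rs: "\<forall>i<n. r i \<in> polys V \<and> s i \<in> S"
    using assms(1) unfolding ideal_gen_def by blast
  have "P (\<Sum>i<k. r i * s i)" if "k \<le> n" for k
    using that by (induct k) (auto simp: assms(2,3) rs)
  then show ?thesis using p by blast
qed

lemma ideal_gen_zero [simp]: "0 \<in> ideal_gen V S"
  unfolding ideal_gen_def by (rule CollectI, rule exI[of _ 0]) auto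

lemma ideal_gen_add_mult:
  assumes "p \<in> ideal_gen V S" "r \<in> polys V" "s \<in> S"
  shows "p + r * s \<in> ideal_gen V S"
proof -
  obtain n :: nat and rr ss where p: "p = (\<Sum>i<n. rr i * ss i)" "\<forall>i<n. rr i \<in> polys V \<and> ss i \<in> S"
    using assms(1) unfolding ideal_gen_def by blast
  have "p + r * s = (\<Sum>i<Suc n. (rr(n := r)) i * (ss(n := s)) i)"
    using p(1) by simp
  moreover have "\<forall>i<Suc n. (rr(n := r)) i \<in> polys V \<and> (ss(n := s)) i \<in> S"
    using p(2) assms by (auto simp: less_Suc_eq)
  ultimately show ?thesis unfolding ideal_gen_def by blast
qed

lemma ideal_gen_base: "s \<in> S \<Longrightarrow> s \<in> ideal_gen V S"
  using ideal_gen_add_mult[of 0 V S 1 s] by simp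

lemma ideal_gen_add:
  assumes "p \<in> ideal_gen V S" "q \<in> ideal_gen V S"
  shows "p + q \<in> ideal_gen V S"
  using assms(2) by (induct q rule: ideal_gen_induct)
    (simp_all add: assms(1) ideal_gen_add_mult flip: add.assoc)

lemma ideal_gen_mult:
  assumes "r \<in> polys V" "p \<in> ideal_gen V S"
  shows "r * p \<in> ideal_gen V S"
  using assms(2) by (induct p rule: ideal_gen_induct)
    (auto simp: distrib_left assms(1) simp flip: mult.assoc intro!: ideal_gen_add_mult polys_mult)

lemma ideal_gen_Const_mult: "p \<in> ideal_gen V S \<Longrightarrow> Const c * p \<in> ideal_gen V S"
  by (rule ideal_gen_mult) auto

lemma ideal_gen_sum: "(\<And>i. i \<in> A \<Longrightarrow> f i \<in> ideal_gen V S) \<Longrightarrow> sum f A \<in> ideal_gen V S"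
  by (induct A rule: infinite_finite_induct) (auto intro: ideal_gen_add)

lemma ideal_gen_minimal:
  assumes "T \<subseteq> ideal_gen V S"
  shows "ideal_gen V T \<subseteq> ideal_gen V S"
proof
  fix p assume "p \<in> ideal_gen V T"
  then show "p \<in> ideal_gen V S"
    by (induct p rule: ideal_gen_induct) (use assms in \<open>auto intro: ideal_gen_add ideal_gen_mult\<close>)
qed

lemma ideal_gen_mono: "S \<subseteq> T \<Longrightarrow> ideal_gen V S \<subseteq> ideal_gen V T"
  by (rule ideal_gen_minimal) (auto intro: ideal_gen_base)

lemma ideal_gen_act:
  assumes gen: "\<And>x. x \<in> V \<Longrightarrow> gen g x \<in> polys V"
    and S: "\<And>s. s \<in> S \<Longrightarrow> act gen g s \<in> ideal_gen V S"
    and p: "p \<in> ideal_gen V S"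
  shows "act gen g p \<in> ideal_gen V S"
  using p
proof (induct p rule: ideal_gen_induct)
  case (step p r s)
  have "act gen g r * s \<in> ideal_gen V S"
    using step by (intro ideal_gen_mult act_in_polys ideal_gen_base gen)
  moreover have "r * act gen g s \<in> ideal_gen V S"
    using step by (intro ideal_gen_mult S)
  ultimately have "act gen g p + (act gen g r * s + r * act gen g s) \<in> ideal_gen V S"
    using step(1) by (intro ideal_gen_add)
  then show ?case by (simp add: act_add act_mult)
qed simp

lemma ideal_gen_submod_gen_act:
  assumes "\<And>x. x \<in> V \<Longrightarrow> gen g x \<in> polys V" and "p \<in> ideal_gen V (submod_gen (act gen) S)"
  shows "act gen g p \<in> ideal_gen V (submod_gen (act gen) S)"
proof (rule ideal_gen_act)
  show "x \<in> V \<Longrightarrow> gen g x \<in> polys V" for x by (rule assms(1))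
  show "p \<in> ideal_gen V (submod_gen (act gen) S)" by (rule assms(2))
  fix s assume "s \<in> submod_gen (act gen) S"
  then show "act gen g s \<in> ideal_gen V (submod_gen (act gen) S)"
    by (intro ideal_gen_base submod_gen.action)
qed


section \<open>Isotypic components\<close>

lemma span_of_zero: "0 \<in> span_of m w"
  unfolding span_of_def by (rule CollectI, rule exI[of _ "\<lambda>_. 0"]) (simp add: Const_def)

lemma span_of_add:
  assumes "p \<in> span_of m w" "q \<in> span_of m w"
  shows "p + q \<in> span_of m w"
proof -
  obtain c d where "p = (\<Sum>i\<le>m. Const (c i) * w i)" "q = (\<Sum>i\<le>m. Const (d i) * w i)"
    using assms unfolding span_of_def by blast
  then have "p + q = (\<Sum>i\<le>m. Const (c i + d i) * w i)"
    by (simp add: Const_add distrib_right sum.distrib)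
  then show ?thesis unfolding span_of_def by (intro CollectI exI[of _ "\<lambda>i. c i + d i"]) simp
qed

lemma span_of_Const_mult:
  assumes "p \<in> span_of m w"
  shows "Const a * p \<in> span_of m w"
proof -
  obtain c where "p = (\<Sum>i\<le>m. Const (c i) * w i)"
    using assms unfolding span_of_def by blast
  then have "Const a * p = (\<Sum>i\<le>m. Const (a * c i) * w i)"
    by (simp add: Const_mult sum_distrib_left mult.assoc)
  then show ?thesis unfolding span_of_def by (intro CollectI exI[of _ "\<lambda>i. a * c i"]) simp
qed

lemma span_of_sum: "(\<And>i. i \<in> A \<Longrightarrow> f i \<in> span_of m w) \<Longrightarrow> sum f A \<in> span_of m w"
  by (induct A rule: infinite_finite_induct) (auto intro: span_of_add span_of_zero)

lemma span_of_basis: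
  assumes "j \<le> m"
  shows "w j \<in> span_of m w"
proof -
  have "(\<Sum>i\<le>m. Const (if i = j then 1 else 0) * w i) = (\<Sum>i\<le>m. if i = j then w i else 0)"
    by (rule sum.cong) (auto simp: Const_def)
  also have "\<dots> = w j" using assms by simp
  finally show ?thesis
    unfolding span_of_def by (intro CollectI exI[of _ "\<lambda>i. if i = j then 1 else 0"]) simp
qed

lemma span_of_act:
  assumes "is_Lcopy V (act gen) m w" "p \<in> span_of m w"
  shows "act gen g p \<in> span_of m w"
proof -
  have "act gen g (w i) \<in> span_of m w" if "i \<le> m" for i
    using assms(1) that unfolding is_Lcopy_def
    by (cases g) (auto intro!: span_of_Const_mult span_of_basis span_of_zero)
  moreover obtain c where "p = (\<Sum>i\<le>m. Const (c i) * w i)"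
    using assms(2) unfolding span_of_def by blast
  ultimately show ?thesis
    by (auto simp: act_sum act_Const_mult intro!: span_of_sum span_of_Const_mult)
qed

lemma isotypic_induct [consumes 1, case_names zero step]:
  assumes "p \<in> isotypic V A m" and "P 0"
    and "\<And>p w q. P p \<Longrightarrow> is_Lcopy V A m w \<Longrightarrow> q \<in> span_of m w \<Longrightarrow> P (p + q)"
  shows "P p"
proof -
  obtain n :: nat and u where p: "p = (\<Sum>j<n. u j)"
    and u: "\<forall>j<n. \<exists>w. is_Lcopy V A m w \<and> u j \<in> span_of m w"
    using assms(1) unfolding isotypic_def by blast
  have "P (\<Sum>j<k. u j)" if "k \<le> n" for k
    using that by (induct k) (use assms(2,3) u in \<open>auto simp: Suc_le_eq\<close>)
  then show ?thesis using p by blast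
qed

lemma isotypic_zero [simp]: "0 \<in> isotypic V A m"
  unfolding isotypic_def by (rule CollectI, rule exI[of _ 0]) auto

lemma isotypic_add_span:
  assumes "p \<in> isotypic V A m" "is_Lcopy V A m w" "q \<in> span_of m w"
  shows "p + q \<in> isotypic V A m"
proof -
  obtain n :: nat and u where p: "p = (\<Sum>j<n. u j)" "\<forall>j<n. \<exists>w. is_Lcopy V A m w \<and> u j \<in> span_of m w"
    using assms(1) unfolding isotypic_def by blast
  have "p + q = (\<Sum>j<Suc n. (u(n := q)) j)" using p(1) by simp
  moreover have "\<forall>j<Suc n. \<exists>w. is_Lcopy V A m w \<and> (u(n := q)) j \<in> span_of m w"
    using p(2) assms by (auto simp: less_Suc_eq)
  ultimately show ?thesis unfolding isotypic_def by blast
qed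

lemma span_of_subset_isotypic: "is_Lcopy V A m w \<Longrightarrow> span_of m w \<subseteq> isotypic V A m"
  using isotypic_add_span[OF isotypic_zero] by fastforce

lemma isotypic_add:
  assumes "p \<in> isotypic V A m" "q \<in> isotypic V A m"
  shows "p + q \<in> isotypic V A m"
  using assms(2)
proof (induct q rule: isotypic_induct)
  case (step q w r)
  then show ?case unfolding add.assoc[symmetric] by (rule isotypic_add_span)
qed (simp add: assms(1))

lemma isotypic_Const_mult: "p \<in> isotypic V A m \<Longrightarrow> Const c * p \<in> isotypic V A m"
proof (induct p rule: isotypic_induct)
  case (step p w q)
  then show ?case unfolding distrib_left by (intro isotypic_add_span span_of_Const_mult)
qed simp

lemma isotypic_act: "p \<in> isotypic V (act gen) m \<Longrightarrow> act gen g p \<in> isotypic V (act gen) m"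
proof (induct p rule: isotypic_induct)
  case (step p w q)
  then show ?case unfolding act_add by (intro isotypic_add_span span_of_act)
qed simp

lemma submod_gen_subset_isotypic:
  assumes "S \<subseteq> isotypic V (act gen) m"
  shows "submod_gen (act gen) S \<subseteq> isotypic V (act gen) m"
proof
  fix p assume "p \<in> submod_gen (act gen) S"
  then show "p \<in> isotypic V (act gen) m"
    by induct (use assms in \<open>auto intro: isotypic_add isotypic_Const_mult isotypic_act\<close>)
qed

lemma isotypic_subset_tkk_ideal:
  assumes "m \<noteq> 0" "m \<noteq> 2"
  shows "isotypic V A m \<subseteq> tkk_ideal V A"
proof
  fix p assume "p \<in> isotypic V A m"
  then have "p \<in> (\<Union>m\<in>{m. m \<noteq> 0 \<and> m \<noteq> 2}. isotypic V A m)" using assms by blast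
  then show "p \<in> tkk_ideal V A" unfolding tkk_ideal_def by (rule ideal_gen_base)
qed

lemma ideal_gen_subset_tkk_ideal: "T \<subseteq> tkk_ideal V A \<Longrightarrow> ideal_gen V T \<subseteq> tkk_ideal V A"
  unfolding tkk_ideal_def by (rule ideal_gen_minimal)

lemma isotypic_subset_ideal_gen:
  assumes highest: "\<And>w. is_Lcopy V (act gen) m w \<Longrightarrow> w 0 \<in> ideal_gen V S"
    and F_stable: "\<And>p. p \<in> ideal_gen V S \<Longrightarrow> act gen F p \<in> ideal_gen V S"
  shows "isotypic V (act gen) m \<subseteq> ideal_gen V S"
proof
  fix p assume "p \<in> isotypic V (act gen) m"
  then show "p \<in> ideal_gen V S"
  proof (induct p rule: isotypic_induct)
    case (step p w q)
    have F: "\<forall>i\<le>m. act gen F (w i) = (if i = m then 0 else w (Suc i))"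
      using step(2) unfolding is_Lcopy_def by blast
    have w: "w i \<in> ideal_gen V S" if "i \<le> m" for i
      using that
    proof (induct i)
      case 0
      show ?case using highest[OF step(2)] .
    next
      case (Suc i)
      then have "w (Suc i) = act gen F (w i)" using F by simp
      then show ?case using Suc F_stable by simp
    qed
    obtain c where q: "q = (\<Sum>i\<le>m. Const (c i) * w i)"
      using step(3) unfolding span_of_def by blast
    have "q \<in> ideal_gen V S"
      unfolding q using w by (auto intro!: ideal_gen_sum ideal_gen_Const_mult)
    with step(1) show ?case by (rule ideal_gen_add)
  qed simp
qed


section \<open>A copy of \<open>L(4)\<close> in \<open>S\<^sup>2(L(2) \<otimes> B)\<close>\<close>

lemma act_gen_B_Var:
  "act gen_B E (Var (b, E)) = 0"
  "act gen_B E (Var (b, H)) = - 2 * Var (b, E)"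
  "act gen_B E (Var (b, F)) = Var (b, H)"
  "act gen_B H (Var (b, E)) = 2 * Var (b, E)"
  "act gen_B H (Var (b, H)) = 0"
  "act gen_B H (Var (b, F)) = - 2 * Var (b, F)"
  "act gen_B F (Var (b, E)) = - Var (b, H)"
  "act gen_B F (Var (b, H)) = 2 * Var (b, F)"
  "act gen_B F (Var (b, F)) = 0"
  by (simp_all add: act_Var gen_B_def)

text \<open>The string \<open>f\<^sup>i ((e \<otimes> b) (e \<otimes> b'))\<close>, \<open>i \<le> 4\<close>.\<close>

definition L4_basis :: "'b \<Rightarrow> 'b \<Rightarrow> nat \<Rightarrow> ('b \<times> sl2b, 'k::comm_ring_1) mpoly" where
  "L4_basis b b' i =
    (let e = Var (b, E); h = Var (b, H); f = Var (b, F);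
         e' = Var (b', E); h' = Var (b', H); f' = Var (b', F)
     in [e * e', - (h * e') - e * h', 2 * (h * h') - 2 * (f * e') - 2 * (e * f'),
         6 * (f * h') + 6 * (h * f'), 24 * (f * f')] ! i)"

lemmas act_L4_simps = act_mult act_add act_diff act_uminus act_gen_B_Var L4_basis_def Let_def

text \<open>The index \<open>1\<close> is written \<open>Suc 0\<close>, the form the simplifier produces in the goals.\<close>

lemma act_F_L4_basis:
  "act gen_B F (L4_basis b b' 0) = L4_basis b b' (Suc 0)"
  "act gen_B F (L4_basis b b' (Suc 0)) = L4_basis b b' 2"
  "act gen_B F (L4_basis b b' 2) = L4_basis b b' 3"
  "act gen_B F (L4_basis b b' 3) = L4_basis b b' 4"
  "act gen_B F (L4_basis b b' 4) = (0 :: ('b \<times> sl2b, 'k::comm_ring_1) mpoly)"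
  by (simp_all add: act_L4_simps algebra_simps)

lemma act_H_L4_basis:
  "act gen_B H (L4_basis b b' 0) = 4 * L4_basis b b' 0"
  "act gen_B H (L4_basis b b' (Suc 0)) = 2 * L4_basis b b' (Suc 0)"
  "act gen_B H (L4_basis b b' 2) = 0"
  "act gen_B H (L4_basis b b' 3) = - 2 * L4_basis b b' 3"
  "act gen_B H (L4_basis b b' 4) = - 4 * (L4_basis b b' 4 :: ('b \<times> sl2b, 'k::comm_ring_1) mpoly)"
  by (simp_all add: act_L4_simps algebra_simps)

lemma act_E_L4_basis:
  "act gen_B E (L4_basis b b' 0) = 0"
  "act gen_B E (L4_basis b b' (Suc 0)) = 4 * L4_basis b b' 0"
  "act gen_B E (L4_basis b b' 2) = 6 * L4_basis b b' (Suc 0)"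
  "act gen_B E (L4_basis b b' 3) = 6 * L4_basis b b' 2"
  "act gen_B E (L4_basis b b' 4) = 4 * (L4_basis b b' 3 :: ('b \<times> sl2b, 'k::comm_ring_1) mpoly)"
  by (simp_all add: act_L4_simps algebra_simps)

lemma L4_basis_4_neq_0: "L4_basis b b' 4 \<noteq> (0 :: ('b \<times> sl2b, 'k::field_char_0) mpoly)"
proof
  let ?ff = "Poly_Mapping.single (b, F) 1 + Poly_Mapping.single (b', F) (1::nat)"
  assume "L4_basis b b' 4 = (0 :: ('b \<times> sl2b, 'k) mpoly)"
  then have "Poly_Mapping.lookup (Const 24 * Poly_Mapping.single ?ff (1::'k)) ?ff = 0"
    by (simp add: L4_basis_def Var_def mult_single)
  then show False by (simp only: lookup_Const_mult) simp
qed

text \<open>Applying \<open>f\<close> shifts the basis up and kills the last vector, which is nonzero; so the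
  coefficients vanish one after another.\<close>

lemma L4_basis_independent:
  fixes b b' :: 'b and c :: "nat \<Rightarrow> 'k::field_char_0"
  assumes "(\<Sum>i\<le>4. Const (c i) * L4_basis b b' i) = 0"
  shows "c 0 = 0 \<and> c 1 = 0 \<and> c 2 = 0 \<and> c 3 = 0 \<and> c 4 = 0"
proof -
  let ?w = "L4_basis b b' :: nat \<Rightarrow> ('b \<times> sl2b, 'k) mpoly"
  have T4: "Const (c 0) * ?w 0 + Const (c 1) * ?w 1 + Const (c 2) * ?w 2 + Const (c 3) * ?w 3
      + Const (c 4) * ?w 4 = 0"
    using assms by (simp add: numeral_eq_Suc atMost_Suc add_ac)
  have T3: "Const (c 0) * ?w 1 + Const (c 1) * ?w 2 + Const (c 2) * ?w 3 + Const (c 3) * ?w 4 = 0"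
    using arg_cong[OF T4, of "act gen_B F"] by (simp add: act_add act_Const_mult act_F_L4_basis)
  have T2: "Const (c 0) * ?w 2 + Const (c 1) * ?w 3 + Const (c 2) * ?w 4 = 0"
    using arg_cong[OF T3, of "act gen_B F"] by (simp add: act_add act_Const_mult act_F_L4_basis)
  have T1: "Const (c 0) * ?w 3 + Const (c 1) * ?w 4 = 0"
    using arg_cong[OF T2, of "act gen_B F"] by (simp add: act_add act_Const_mult act_F_L4_basis)
  have T0: "Const (c 0) * ?w 4 = 0"
    using arg_cong[OF T1, of "act gen_B F"] by (simp add: act_add act_Const_mult act_F_L4_basis)
  have w4: "?w 4 \<noteq> 0" by (rule L4_basis_4_neq_0)
  have "c 0 = 0" using T0 w4 by (simp add: Const_mult_eq_0_iff)
  moreover have "c 1 = 0" using T1 \<open>c 0 = 0\<close> w4 by (simp add: Const_mult_eq_0_iff)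
  moreover have "c 2 = 0" using T2 \<open>c 0 = 0\<close> \<open>c 1 = 0\<close> w4
    by (simp add: Const_mult_eq_0_iff)
  moreover have "c 3 = 0" using T3 \<open>c 0 = 0\<close> \<open>c 1 = 0\<close> \<open>c 2 = 0\<close> w4
    by (simp add: Const_mult_eq_0_iff)
  moreover have "c 4 = 0" using T4 \<open>c 0 = 0\<close> \<open>c 1 = 0\<close> \<open>c 2 = 0\<close> \<open>c 3 = 0\<close> w4
    by (simp add: Const_mult_eq_0_iff)
  ultimately show ?thesis by blast
qed

lemma L4_basis_in_polys:
  assumes "b \<in> IB" "b' \<in> IB" "i \<le> 4"
  shows "L4_basis b b' i \<in> polys (IB \<times> UNIV)"
  using assms by (auto simp: L4_basis_def Let_def le_Suc_eq numeral_eq_Suc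
      intro!: polys_mult polys_add polys_diff polys_uminus polys_Var)

lemma all_le_4_iff: "(\<forall>i\<le>(4::nat). P i) \<longleftrightarrow> P 0 \<and> P 1 \<and> P 2 \<and> P 3 \<and> P 4"
  by (auto simp: le_Suc_eq numeral_eq_Suc)

lemma is_Lcopy_L4_basis:
  assumes "b \<in> IB" "b' \<in> IB"
  shows "is_Lcopy (IB \<times> UNIV) (act gen_B) 4 (L4_basis b b' :: nat \<Rightarrow> ('b \<times> sl2b, 'k::field_char_0) mpoly)"
  unfolding is_Lcopy_def all_le_4_iff
proof (intro conjI allI impI)
  fix c :: "nat \<Rightarrow> 'k" assume "(\<Sum>i\<le>4. Const (c i) * L4_basis b b' i) = 0"
  from L4_basis_independent[OF this] show "c 0 = 0" "c 1 = 0" "c 2 = 0" "c 3 = 0" "c 4 = 0"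
    by auto
qed (use assms in \<open>simp_all add: L4_basis_in_polys act_F_L4_basis act_H_L4_basis act_E_L4_basis,
    simp add: eval_nat_numeral act_F_L4_basis\<close>)

lemma Var_E_mult_Var_E_in_isotypic_4:
  fixes b b' :: 'b
  assumes "b \<in> IB" "b' \<in> IB"
  shows "(Var (b, E) * Var (b', E) :: ('b \<times> sl2b, 'k::field_char_0) mpoly)
           \<in> isotypic (IB \<times> UNIV) (act gen_B) 4"
proof -
  have "L4_basis b b' 0 \<in> span_of 4 (L4_basis b b' :: nat \<Rightarrow> ('b \<times> sl2b, 'k) mpoly)"
    by (rule span_of_basis) simp
  then show ?thesis
    using span_of_subset_isotypic[OF is_Lcopy_L4_basis[OF assms]] by (auto simp: L4_basis_def)
qed


section \<open>Weights\<close>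

definition var_half_weight :: "'a + 'b \<times> sl2b \<Rightarrow> int" where
  "var_half_weight x = (case x of Inl _ \<Rightarrow> 0 | Inr (_, s) \<Rightarrow> (case s of E \<Rightarrow> 1 | H \<Rightarrow> 0 | F \<Rightarrow> -1))"

definition half_weight :: "('a + 'b \<times> sl2b \<Rightarrow>\<^sub>0 nat) \<Rightarrow> int" where
  "half_weight a = (\<Sum>x\<in>Poly_Mapping.keys a. var_half_weight x * int (Poly_Mapping.lookup a x))"

lemma gen_U_H: "gen_U H x = Const (of_int (2 * var_half_weight x)) * Var x"
  by (cases x) (auto simp: gen_U_def var_half_weight_def split: sl2b.splits)

lemma act_gen_U_H_single:
  "act (gen_U :: sl2b \<Rightarrow> 'a + 'b \<times> sl2b \<Rightarrow> ('a + 'b \<times> sl2b, 'k::comm_ring_1) mpoly) H (Poly_Mapping.single a c)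
     = Poly_Mapping.single a (of_int (2 * half_weight a) * c)"
proof -
  have "act (gen_U :: sl2b \<Rightarrow> 'a + 'b \<times> sl2b \<Rightarrow> ('a + 'b \<times> sl2b, 'k) mpoly) H (Poly_Mapping.single a c)
     = (\<Sum>x\<in>Poly_Mapping.keys a. Const (of_int (2 * var_half_weight x)) * (pd x (Poly_Mapping.single a c) * Var x))"
    using vars_single[of a c] by (subst act_eq_sum_over[of "Poly_Mapping.keys a"]) (auto simp: gen_U_H ac_simps)
  also have "\<dots> = (\<Sum>x\<in>Poly_Mapping.keys a.
      Poly_Mapping.single a (of_int (2 * var_half_weight x) * (of_nat (Poly_Mapping.lookup a x) * c)))"
    by (rule sum.cong) (simp_all add: pd_single_mult_Var Const_def mult_single)
  also have "\<dots> = Poly_Mapping.single a (of_int (2 * half_weight a) * c)"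
    by (simp add: single_sum half_weight_def sum_distrib_left sum_distrib_right of_int_sum mult.assoc)
  finally show ?thesis .
qed

lemma lookup_act_gen_U_H:
  "Poly_Mapping.lookup (act (gen_U :: sl2b \<Rightarrow> 'a + 'b \<times> sl2b \<Rightarrow> ('a + 'b \<times> sl2b, 'k::comm_ring_1) mpoly) H p) a
    = of_int (2 * half_weight a) * Poly_Mapping.lookup p a"
  by (induct p rule: single_add_induct)
    (simp_all add: act_add lookup_add act_gen_U_H_single lookup_single when_def distrib_left)

lemma half_weight_le_E_degree:
  "half_weight a \<le> (\<Sum>x\<in>{x\<in>Poly_Mapping.keys a. \<exists>b. x = Inr (b, E)}. int (Poly_Mapping.lookup a x))"
proof -
  have "half_weight a \<le>
      (\<Sum>x\<in>Poly_Mapping.keys a. if \<exists>b. x = Inr (b, E) then int (Poly_Mapping.lookup a x) else 0)"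
    unfolding half_weight_def
    by (rule sum_mono) (auto simp: var_half_weight_def split: sum.splits sl2b.splits)
  then show ?thesis by (simp add: sum.inter_filter)
qed

lemma two_E_factors_if_half_weight_ge_2:
  fixes a :: "'a + 'b \<times> sl2b \<Rightarrow>\<^sub>0 nat"
  assumes "Poly_Mapping.keys a \<subseteq> vars_U IA IB" "2 \<le> half_weight a"
  shows "\<exists>c b b'. b \<in> IB \<and> b' \<in> IB \<and>
           a = c + Poly_Mapping.single (Inr (b, E)) 1 + Poly_Mapping.single (Inr (b', E)) 1"
proof -
  let ?K = "{x\<in>Poly_Mapping.keys a. \<exists>b. x = Inr (b, E)}"
  let ?deg = "\<lambda>a'. \<Sum>x\<in>?K. int (Poly_Mapping.lookup a' x)"
  have factor: "\<exists>x\<in>?K. Poly_Mapping.lookup a' x \<noteq> 0" if "1 \<le> ?deg a'" for a'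
  proof (rule ccontr)
    assume "\<not> ?thesis"
    then have "?deg a' = 0" by (intro sum.neutral) auto
    with that show False by simp
  qed
  have "2 \<le> ?deg a" using assms(2) half_weight_le_E_degree[of a] by linarith
  then obtain x where x: "x \<in> ?K" "Poly_Mapping.lookup a x \<noteq> 0" using factor[of a] by auto
  define a' where "a' = a - Poly_Mapping.single x 1"
  have a: "a = a' + Poly_Mapping.single x 1"
    unfolding a'_def using x(2) by (rule minus_single_add_single[symmetric])
  have "int (Poly_Mapping.lookup a y) = int (Poly_Mapping.lookup a' y) + (if y = x then 1 else 0)" for y
    using arg_cong[OF a, of "\<lambda>f. Poly_Mapping.lookup f y"] by (simp add: lookup_add lookup_single when_def)
  then have "?deg a = ?deg a' + (\<Sum>y\<in>?K. if y = x then 1 else 0)"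
    by (simp add: sum.distrib)
  also have "(\<Sum>y\<in>?K. if y = x then 1 else 0) = (1::int)"
    using x(1) by simp
  finally have "1 \<le> ?deg a'" using \<open>2 \<le> ?deg a\<close> by linarith
  then obtain y where y: "y \<in> ?K" "Poly_Mapping.lookup a' y \<noteq> 0" using factor[of a'] by auto
  obtain b b' where b: "x = Inr (b, E)" and b': "y = Inr (b', E)" using x(1) y(1) by blast
  have "b \<in> IB" "b' \<in> IB" using x(1) y(1) assms(1) b b' by (auto simp: vars_U_def)
  moreover have "a = (a' - Poly_Mapping.single y 1 + Poly_Mapping.single y 1) + Poly_Mapping.single x 1"
    using a minus_single_add_single[OF y(2)] by simp
  then have "a = (a' - Poly_Mapping.single y 1) + Poly_Mapping.single x 1 + Poly_Mapping.single y 1"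
    by (simp only: add.assoc add.commute[of "Poly_Mapping.single y 1"])
  ultimately show ?thesis using b b' by blast
qed

lemma H_eigenvector_in_ideal_gen_E_products:
  fixes p :: "('a + 'b \<times> sl2b, 'k::field_char_0) mpoly"
  assumes "p \<in> polys (vars_U IA IB)" "act gen_U H p = of_nat m * p" "m \<noteq> 0" "m \<noteq> 2"
  shows "p \<in> ideal_gen (vars_U IA IB) {Var (Inr (b, E)) * Var (Inr (b', E)) | b b'. b \<in> IB \<and> b' \<in> IB}"
proof -
  let ?G = "{Var (Inr (b, E)) * Var (Inr (b', E)) | b b'. b \<in> IB \<and> b' \<in> IB} :: ('a + 'b \<times> sl2b, 'k) mpoly set"
  have "Poly_Mapping.single a (Poly_Mapping.lookup p a) \<in> ideal_gen (vars_U IA IB) ?G"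
    if a: "a \<in> Poly_Mapping.keys p" for a
  proof -
    have "Poly_Mapping.lookup (act gen_U H p) a = Poly_Mapping.lookup (of_nat m * p) a"
      using assms(2) by simp
    then have "of_int (2 * half_weight a) * Poly_Mapping.lookup p a = (of_nat m :: 'k) * Poly_Mapping.lookup p a"
      using lookup_Const_mult[of "of_nat m" p a] by (simp add: lookup_act_gen_U_H)
    then have "(of_int (2 * half_weight a) :: 'k) = of_int (int m)" using a by (simp add: in_keys_iff)
    then have "2 * half_weight a = int m" by (simp only: of_int_eq_iff)
    then have "2 \<le> half_weight a" using assms(3,4) by presburger
    moreover have keys: "Poly_Mapping.keys a \<subseteq> vars_U IA IB"
      using a assms(1) by (force simp: polys_def vars_def)
    ultimately obtain c b b' where "b \<in> IB" "b' \<in> IB"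
      and c: "a = c + Poly_Mapping.single (Inr (b, E)) 1 + Poly_Mapping.single (Inr (b', E)) 1"
      using two_E_factors_if_half_weight_ge_2 by blast
    then have "Var (Inr (b, E)) * Var (Inr (b', E)) \<in> ?G" by blast
    moreover have "Poly_Mapping.single c (Poly_Mapping.lookup p a) \<in> polys (vars_U IA IB)"
      using vars_single[of c] keys c by (auto simp: polys_def keys_add_nat)
    moreover have "Poly_Mapping.single a (Poly_Mapping.lookup p a) =
        Poly_Mapping.single c (Poly_Mapping.lookup p a) * (Var (Inr (b, E)) * Var (Inr (b', E)))"
      by (simp add: c Var_def mult_single add.assoc)
    ultimately show ?thesis by (auto intro: ideal_gen_mult ideal_gen_base)
  qed
  then show ?thesis by (subst sum_single_lookup[symmetric]) (rule ideal_gen_sum)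
qed

lemma gen_U_in_polys: "x \<in> vars_U IA IB \<Longrightarrow> gen_U g x \<in> polys (vars_U IA IB)"
  by (auto simp: gen_U_def vars_U_def split: prod.splits intro!: polys_mult polys_Var)

lemma tkk_ideal_subset_ideal_gen_submod_gen:
  "tkk_ideal (vars_U IA IB) (act (gen_U :: sl2b \<Rightarrow> 'a + 'b \<times> sl2b \<Rightarrow> ('a + 'b \<times> sl2b, 'k::field_char_0) mpoly))
     \<subseteq> ideal_gen (vars_U IA IB)
         (submod_gen (act gen_U) {Var (Inr (b, E)) * Var (Inr (b', E)) | b b'. b \<in> IB \<and> b' \<in> IB})"
  (is "tkk_ideal ?V ?A \<subseteq> ideal_gen ?V (submod_gen ?A ?G)")
proof -
  have highest: "w 0 \<in> ideal_gen ?V (submod_gen ?A ?G)"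
    if "is_Lcopy ?V ?A m w" "m \<noteq> 0" "m \<noteq> 2" for m w
  proof -
    have "w 0 \<in> polys ?V" "?A H (w 0) = of_nat m * w 0"
      using that(1) unfolding is_Lcopy_def by auto
    then have "w 0 \<in> ideal_gen ?V ?G"
      using that(2,3) by (rule H_eigenvector_in_ideal_gen_E_products)
    then show ?thesis using ideal_gen_mono[of ?G "submod_gen ?A ?G"] by (auto intro: submod_gen.base)
  qed
  have F_stable: "?A F p \<in> ideal_gen ?V (submod_gen ?A ?G)"
    if "p \<in> ideal_gen ?V (submod_gen ?A ?G)" for p
    using gen_U_in_polys that by (rule ideal_gen_submod_gen_act)
  have "isotypic ?V ?A m \<subseteq> ideal_gen ?V (submod_gen ?A ?G)" if "m \<noteq> 0" "m \<noteq> 2" for m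
    using highest that F_stable by (intro isotypic_subset_ideal_gen)
  then show ?thesis unfolding tkk_ideal_def by (intro ideal_gen_minimal) blast
qed


section \<open>The embedding \<open>S(L(2) \<otimes> B) \<rightarrow> S(U)\<close>\<close>

definition embed_monom :: "('b \<times> sl2b \<Rightarrow>\<^sub>0 nat) \<Rightarrow> ('a + 'b \<times> sl2b \<Rightarrow>\<^sub>0 nat)" where
  "embed_monom a = (\<Sum>x\<in>Poly_Mapping.keys a. Poly_Mapping.single (Inr x) (Poly_Mapping.lookup a x))"

lemma lookup_embed_monom_Inr [simp]: "Poly_Mapping.lookup (embed_monom a) (Inr x) = Poly_Mapping.lookup a x"
  by (auto simp: embed_monom_def lookup_sum lookup_single when_def in_keys_iff)

lemma lookup_embed_monom_Inl [simp]: "Poly_Mapping.lookup (embed_monom a) (Inl y) = 0"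
  by (auto simp: embed_monom_def lookup_sum lookup_single when_def)

lemma embed_monom_eqI:
  "(\<And>x. Poly_Mapping.lookup f (Inr x) = Poly_Mapping.lookup g (Inr x)) \<Longrightarrow>
   (\<And>y. Poly_Mapping.lookup f (Inl y) = Poly_Mapping.lookup g (Inl y)) \<Longrightarrow> f = g"
  by (rule poly_mapping_eqI) (metis sum.exhaust)

lemma embed_monom_add: "embed_monom (a + b) = embed_monom a + embed_monom b"
  by (rule embed_monom_eqI) (simp_all add: lookup_add)

lemma embed_monom_single: "embed_monom (Poly_Mapping.single x n) = Poly_Mapping.single (Inr x) n"
  by (rule embed_monom_eqI) (simp_all add: lookup_single when_def)

lemma inj_embed_monom: "inj embed_monom"
  by (rule injI, rule poly_mapping_eqI) (metis lookup_embed_monom_Inr)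

lemma keys_embed_monom: "Poly_Mapping.keys (embed_monom a) = Inr ` Poly_Mapping.keys a"
proof -
  have "k \<in> Poly_Mapping.keys (embed_monom a) \<longleftrightarrow> k \<in> Inr ` Poly_Mapping.keys a" for k
    by (cases k) (auto simp: in_keys_iff)
  then show ?thesis by blast
qed

lemma embed_eq_sum:
  "embed q = (\<Sum>a\<in>Poly_Mapping.keys q. Poly_Mapping.single (embed_monom a) (Poly_Mapping.lookup q a))"
  unfolding embed_def embed_monom_def ..

lemma lookup_embed_embed_monom [simp]:
  "Poly_Mapping.lookup (embed q) (embed_monom b) = Poly_Mapping.lookup q b"
proof -
  have "Poly_Mapping.lookup (embed q) (embed_monom b) =
      (\<Sum>a\<in>Poly_Mapping.keys q. if a = b then Poly_Mapping.lookup q a else 0)"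
    unfolding embed_eq_sum lookup_sum
    by (rule sum.cong) (auto simp: lookup_single when_def dest: injD[OF inj_embed_monom])
  also have "\<dots> = Poly_Mapping.lookup q b" by (simp add: in_keys_iff)
  finally show ?thesis .
qed

lemma lookup_embed_notin_range: "k \<notin> range embed_monom \<Longrightarrow> Poly_Mapping.lookup (embed q) k = 0"
  unfolding embed_eq_sum lookup_sum by (rule sum.neutral) (auto simp: lookup_single when_def)

lemma embed_eqI:
  assumes "\<And>b. Poly_Mapping.lookup f (embed_monom b) = Poly_Mapping.lookup g (embed_monom b)"
    and "\<And>k. k \<notin> range embed_monom \<Longrightarrow> Poly_Mapping.lookup f k = Poly_Mapping.lookup g k"
  shows "f = g"
  by (rule poly_mapping_eqI) (metis assms rangeE)

lemma embed_add: "embed (p + q) = embed p + embed q"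
  by (rule embed_eqI) (simp_all add: lookup_add lookup_embed_notin_range)

lemma embed_zero [simp]: "embed 0 = 0"
  by (simp add: embed_def)

lemma embed_single: "embed (Poly_Mapping.single a c) = Poly_Mapping.single (embed_monom a) c"
  by (rule embed_eqI)
    (auto simp: lookup_single when_def lookup_embed_notin_range dest: injD[OF inj_embed_monom])

lemma embed_sum: "embed (sum f A) = (\<Sum>i\<in>A. embed (f i))"
  by (induct A rule: infinite_finite_induct) (auto simp: embed_add)

lemma embed_mult: "embed (p * q) = embed p * embed q"
proof (induct p rule: single_add_induct)
  case (add a c p)
  have "embed (Poly_Mapping.single a c * q) = embed (Poly_Mapping.single a c) * embed q"
  proof (induct q rule: single_add_induct)
    case (add b d q)
    then show ?case by (simp add: distrib_left embed_add mult_single embed_single embed_monom_add)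
  qed simp
  with add show ?case by (simp add: distrib_right embed_add)
qed simp

lemma embed_Const [simp]: "embed (Const c) = Const c"
  by (simp add: Const_def embed_single embed_monom_def)

lemma embed_of_int [simp]: "embed (of_int c) = of_int c"
  using embed_Const[of "of_int c"] by simp

lemma embed_Var [simp]: "embed (Var x) = Var (Inr x)"
  by (simp add: Var_def embed_single embed_monom_single)

lemma embed_Const_mult: "embed (Const c * p) = Const c * embed p"
  by (simp add: embed_mult)

lemma embed_eq_0_iff: "embed p = 0 \<longleftrightarrow> p = 0"
  by (metis embed_zero lookup_embed_embed_monom lookup_zero poly_mapping_eqI)

lemma embed_in_polys:
  fixes p :: "('b \<times> sl2b, 'k::comm_ring_1) mpoly" and IA :: "'a set"
  assumes "p \<in> polys (IB \<times> UNIV)"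
  shows "(embed p :: ('a + 'b \<times> sl2b, 'k) mpoly) \<in> polys (vars_U IA IB)"
  unfolding polys_def mem_Collect_eq
proof
  fix y :: "'a + 'b \<times> sl2b" assume "y \<in> vars (embed p :: ('a + 'b \<times> sl2b, 'k) mpoly)"
  then obtain k where k: "k \<in> Poly_Mapping.keys (embed p)" "y \<in> Poly_Mapping.keys k"
    by (auto simp: in_vars_iff)
  then obtain b where kb: "k = embed_monom b"
    using lookup_embed_notin_range[of k p] by (auto simp: in_keys_iff)
  then have "b \<in> Poly_Mapping.keys p" using k(1) by (simp add: in_keys_iff)
  moreover obtain x where x: "y = Inr x" "x \<in> Poly_Mapping.keys b"
    using k(2) kb keys_embed_monom by blast
  ultimately have "x \<in> vars p" by (auto simp: in_vars_iff)
  then show "y \<in> vars_U IA IB"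
    using assms x(1) by (auto simp: polys_def vars_U_def)
qed

lemma embed_act:
  "embed (act (gen_B :: sl2b \<Rightarrow> 'b \<times> sl2b \<Rightarrow> ('b \<times> sl2b, 'k::comm_ring_1) mpoly) g p)
     = act (gen_U :: sl2b \<Rightarrow> 'a + 'b \<times> sl2b \<Rightarrow> ('a + 'b \<times> sl2b, 'k) mpoly) g (embed p)"
proof (induct p rule: mpoly_induct)
  case (Var x)
  obtain b s where x: "x = (b, s)" by (cases x)
  obtain c t where ct: "ad g s = (c, t)" by (cases "ad g s")
  show ?case by (simp add: act_Var x ct gen_B_def gen_U_def embed_mult)
qed (simp_all add: act_add act_mult embed_add embed_mult)

lemma is_Lcopy_embed:
  fixes w :: "nat \<Rightarrow> ('b \<times> sl2b, 'k::field_char_0) mpoly" and IA :: "'a set"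
  assumes L: "is_Lcopy (IB \<times> UNIV) (act gen_B) m w"
  shows "is_Lcopy (vars_U IA IB) (act (gen_U :: sl2b \<Rightarrow> 'a + 'b \<times> sl2b \<Rightarrow> ('a + 'b \<times> sl2b, 'k) mpoly))
           m (\<lambda>i. embed (w i))"
  unfolding is_Lcopy_def
proof (intro conjI allI impI)
  fix c :: "nat \<Rightarrow> 'k" and i assume "(\<Sum>i\<le>m. Const (c i) * embed (w i)) = (0 :: ('a + 'b \<times> sl2b, 'k) mpoly)" "i \<le> m"
  then have "(\<Sum>i\<le>m. Const (c i) * w i) = 0"
    by (simp add: embed_sum embed_Const_mult flip: embed_eq_0_iff[where 'a = 'a])
  then show "c i = 0" using L \<open>i \<le> m\<close> unfolding is_Lcopy_def by blast
qed (use L in \<open>auto simp: is_Lcopy_def embed_in_polys embed_mult simp flip: embed_act\<close>)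

lemma embed_isotypic:
  fixes q :: "('b \<times> sl2b, 'k::field_char_0) mpoly"
  assumes "q \<in> isotypic (IB \<times> UNIV) (act gen_B) m"
  shows "(embed q :: ('a + 'b \<times> sl2b, 'k) mpoly) \<in> isotypic (vars_U IA IB) (act gen_U) m"
  using assms
proof (induct q rule: isotypic_induct)
  case (step p w q)
  obtain c where "q = (\<Sum>i\<le>m. Const (c i) * w i)"
    using step(3) unfolding span_of_def by blast
  then have "(embed q :: ('a + 'b \<times> sl2b, 'k) mpoly) = (\<Sum>i\<le>m. Const (c i) * embed (w i))"
    by (simp add: embed_sum embed_Const_mult)
  then have "(embed q :: ('a + 'b \<times> sl2b, 'k) mpoly) \<in> span_of m (\<lambda>i. embed (w i))"
    unfolding span_of_def by blast
  with step(1) is_Lcopy_embed[OF step(2)] show ?case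
    unfolding embed_add by (rule isotypic_add_span)
qed simp

lemma embed_tkk_ideal_subset:
  "(embed :: ('b \<times> sl2b, 'k::field_char_0) mpoly \<Rightarrow> ('a + 'b \<times> sl2b, 'k) mpoly)
     ` tkk_ideal (IB \<times> UNIV) (act gen_B) \<subseteq> tkk_ideal (vars_U IA IB) (act gen_U)"
proof clarify
  fix t :: "('b \<times> sl2b, 'k) mpoly" assume "t \<in> tkk_ideal (IB \<times> UNIV) (act gen_B)"
  then show "(embed t :: ('a + 'b \<times> sl2b, 'k) mpoly) \<in> tkk_ideal (vars_U IA IB) (act gen_U)"
    unfolding tkk_ideal_def
  proof (induct t rule: ideal_gen_induct)
    case (step p r s)
    then obtain m where "m \<noteq> 0" "m \<noteq> 2" "s \<in> isotypic (IB \<times> UNIV) (act gen_B) m" by blast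
    then have "(embed s :: ('a + 'b \<times> sl2b, 'k) mpoly)
        \<in> (\<Union>m\<in>{m. m \<noteq> 0 \<and> m \<noteq> 2}. isotypic (vars_U IA IB) (act gen_U) m)"
      using embed_isotypic by blast
    with step show ?case by (simp add: embed_add embed_mult ideal_gen_add_mult embed_in_polys)
  qed simp
qed

lemma submod_gen_embed_subset:
  "submod_gen (act (gen_U :: sl2b \<Rightarrow> 'a + 'b \<times> sl2b \<Rightarrow> ('a + 'b \<times> sl2b, 'k::comm_ring_1) mpoly)) (embed ` S)
     \<subseteq> embed ` submod_gen (act gen_B) S"
proof
  fix p assume "p \<in> submod_gen (act gen_U) (embed ` S)"
  then show "p \<in> embed ` submod_gen (act gen_B) S"
  proof induct
    case zero
    show ?case using embed_zero submod_gen.zero by (metis image_eqI)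
  next
    case (add p q)
    then show ?case by (auto simp flip: embed_add intro: submod_gen.add)
  next
    case (smult p c)
    then show ?case by (auto simp flip: embed_Const_mult intro: submod_gen.smult)
  next
    case (action p g)
    then show ?case by (auto simp flip: embed_act intro: submod_gen.action)
  qed (auto intro: submod_gen.base)
qed

lemma submod_gen_E_products_subset_embed_tkk_ideal:
  "submod_gen (act (gen_U :: sl2b \<Rightarrow> 'a + 'b \<times> sl2b \<Rightarrow> ('a + 'b \<times> sl2b, 'k::field_char_0) mpoly))
       {Var (Inr (b, E)) * Var (Inr (b', E)) | b b'. b \<in> IB \<and> b' \<in> IB}
     \<subseteq> embed ` tkk_ideal (IB \<times> UNIV) (act gen_B)"
proof -
  let ?G = "{Var (b, E) * Var (b', E) | b b'. b \<in> IB \<and> b' \<in> IB} :: ('b \<times> sl2b, 'k) mpoly set"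
  have G: "{Var (Inr (b, E)) * Var (Inr (b', E)) | b b'. b \<in> IB \<and> b' \<in> IB}
      = (embed ` ?G :: ('a + 'b \<times> sl2b, 'k) mpoly set)"
  proof (intro equalityI subsetI)
    fix p :: "('a + 'b \<times> sl2b, 'k) mpoly"
    assume "p \<in> {Var (Inr (b, E)) * Var (Inr (b', E)) | b b'. b \<in> IB \<and> b' \<in> IB}"
    then obtain b b' where "b \<in> IB" "b' \<in> IB"
      and "p = (embed (Var (b, E) * Var (b', E)) :: ('a + 'b \<times> sl2b, 'k) mpoly)"
      by (auto simp: embed_mult)
    then show "p \<in> embed ` ?G" by blast
  qed (fastforce simp: embed_mult)
  have "submod_gen (act gen_B) ?G \<subseteq> isotypic (IB \<times> UNIV) (act gen_B) 4"
    by (rule submod_gen_subset_isotypic) (auto intro: Var_E_mult_Var_E_in_isotypic_4)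
  also have "\<dots> \<subseteq> tkk_ideal (IB \<times> UNIV) (act gen_B)"
    by (rule isotypic_subset_tkk_ideal) simp_all
  finally have "submod_gen (act gen_B) ?G \<subseteq> tkk_ideal (IB \<times> UNIV) (act gen_B)" .
  then show ?thesis
    unfolding G by (rule subset_trans[OF submod_gen_embed_subset image_mono])
qed

theorem proposition3p1:
  fixes IA :: "'a set" and IB :: "'b set"
  defines "V \<equiv> vars_U IA IB"
      and "AU \<equiv> act (gen_U :: sl2b \<Rightarrow> 'a + 'b \<times> sl2b \<Rightarrow> ('a + 'b \<times> sl2b, 'k::field_char_0) mpoly)"
      and "AB \<equiv> act (gen_B :: sl2b \<Rightarrow> 'b \<times> sl2b \<Rightarrow> ('b \<times> sl2b, 'k) mpoly)"
  shows "tkk_ideal V AU =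
           ideal_gen V (submod_gen AU {Var (Inr (b, E)) * Var (Inr (b', E)) | b b'. b \<in> IB \<and> b' \<in> IB})
       \<and> tkk_ideal V AU = ideal_gen V (embed ` tkk_ideal (IB \<times> UNIV) AB)"
proof -
  let ?I = "ideal_gen V (submod_gen AU {Var (Inr (b, E)) * Var (Inr (b', E)) | b b'. b \<in> IB \<and> b' \<in> IB})"
  let ?J = "ideal_gen V (embed ` tkk_ideal (IB \<times> UNIV) AB)"
  have "tkk_ideal V AU \<subseteq> ?I"
    unfolding V_def AU_def by (rule tkk_ideal_subset_ideal_gen_submod_gen)
  moreover have "?I \<subseteq> ?J"
    unfolding V_def AU_def AB_def by (intro ideal_gen_mono submod_gen_E_products_subset_embed_tkk_ideal)
  moreover have "?J \<subseteq> tkk_ideal V AU"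
    unfolding V_def AU_def AB_def by (intro ideal_gen_subset_tkk_ideal embed_tkk_ideal_subset)
  ultimately show ?thesis by blast
qed

end
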